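(* For the $k$-server problem on the line, for every instance $I$, every prediction, and every $\lambda\in(0,1]$, there is $c\ge0$ depending only on the initial configuration such that $\mathrm{LambdaDC}(I)\le\beta(k)\cdot\mathrm{OPT}(I)+c$, where $\beta(k)=\sum_{i=0}^{k-1}\lambda^{-i}$.
   Context: The $k$-server problem on the line: servers on $\mathbb{R}$ labeled $s_1\le\dots\le s_k$, requests revealed online and served by moving a server to them; cost = total distance moved; $\mathrm{OPT}(I)$ is the optimal offline cost. A prediction gives for each request $r_t$ an index $p_t\in\{1,\dots,k\}$. LambdaDC with parameter $\lambda$: if $r_t<s_1$ or $r_t>s_k$, move only the closest server; if $s_i<r_t<s_{i+1}$ and $p_t\le i$, move $s_i$ at speed $1$ and $s_{i+1}$ at speed $\lambda$ towards $r_t$ until one reaches it; if $p_t\ge i+1$, the speeds are swapped. *)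

theory Defs
  imports Complex_Main
begin

text \<open>A configuration is a function s :: nat => real, of which
  only the values s 1, ..., s k (the server positions, labelled so that
  s 1 <= ... <= s k) are relevant. An instance (for a fixed initial configuration)
  is a list of pairs (r_t, p_t): the request r_t and its predicted index p_t.\<close>

definition config_dist :: "nat \<Rightarrow> (nat \<Rightarrow> real) \<Rightarrow> (nat \<Rightarrow> real) \<Rightarrow> real" where
  "config_dist k s s' = (\<Sum>j\<in>{1..k}. \<bar>s' j - s j\<bar>)"

definition lambda_dc_step ::
  "real \<Rightarrow> nat \<Rightarrow> (nat \<Rightarrow> real) \<Rightarrow> real \<Rightarrow> nat \<Rightarrow> (nat \<Rightarrow> real)" where
  "lambda_dc_step lam k s r p =
     (if r < s 1 then s(1 := r)
      else if s k < r then s(k := r)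
      else if (\<exists>i. 1 \<le> i \<and> i < k \<and> s i < r \<and> r < s (Suc i)) then
        (let i = (LEAST i. 1 \<le> i \<and> i < k \<and> s i < r \<and> r < s (Suc i)) in
         if p \<le> i then
           (let t = min (r - s i) ((s (Suc i) - r) / lam)
            in s(i := s i + t, Suc i := s (Suc i) - lam * t))
         else
           (let t = min ((r - s i) / lam) (s (Suc i) - r)
            in s(i := s i + lam * t, Suc i := s (Suc i) - t)))
      else s)"

fun lambda_dc_cost ::
  "real \<Rightarrow> nat \<Rightarrow> (nat \<Rightarrow> real) \<Rightarrow> (real \<times> nat) list \<Rightarrow> real" where
  "lambda_dc_cost lam k s [] = 0"
| "lambda_dc_cost lam k s ((r, p) # I) =
     (let s' = lambda_dc_step lam k s r p
      in config_dist k s s' + lambda_dc_cost lam k s' I)"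

definition valid_schedule ::
  "nat \<Rightarrow> (nat \<Rightarrow> real) \<Rightarrow> real list \<Rightarrow> (nat \<Rightarrow> nat \<Rightarrow> real) \<Rightarrow> bool" where
  "valid_schedule k s0 rs C \<longleftrightarrow>
     (\<forall>j\<in>{1..k}. C 0 j = s0 j) \<and>
     (\<forall>t\<in>{1..length rs}. \<exists>j\<in>{1..k}. C t j = rs ! (t - 1))"

definition schedule_cost :: "nat \<Rightarrow> nat \<Rightarrow> (nat \<Rightarrow> nat \<Rightarrow> real) \<Rightarrow> real" where
  "schedule_cost k n C = (\<Sum>t\<in>{1..n}. config_dist k (C (t - 1)) (C t))"

definition opt_cost :: "nat \<Rightarrow> (nat \<Rightarrow> real) \<Rightarrow> real list \<Rightarrow> real" where
  "opt_cost k s0 rs =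
     Inf {schedule_cost k (length rs) C | C. valid_schedule k s0 rs C}"

end

theory Submission
  imports Defs
begin

(* Potential-function argument, with mu = 1/lam. For a server configuration s and the
   configuration q of an offline schedule, let q_(m) be the m-th smallest of q 1, ..., q k and
     Phi(s, q) = sum_m c_m |s m - q_(m)| + sum_{x<y} mu^(y-x) (s y - s x),
     c_m = 1 + sum_{x<m} mu^(m-x) + sum_{y>m} mu^(y-m).
   When the offline schedule moves by d, Phi grows by at most beta(k) d, because c_m <= beta(k)
   and sorting is 1-Lipschitz for the l1 distance. When LambdaDC serves a request already covered
   by q, Phi drops by at least the distance LambdaDC moves: of the (at most two) servers moving
   towards the request, one moves towards its partner q_(m), and the speed ratio lam is exactly
   what makes that gain pay for the other one. Telescoping gives
   LambdaDC(I) <= beta(k) cost(C) + Phi(s0, s0) for every offline schedule C, and Phi(s0, s0)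
   is the nonnegative second sum at s0. *)

definition l1_dist :: "real list \<Rightarrow> real list \<Rightarrow> real" where
  "l1_dist xs ys = (\<Sum>i<length xs. \<bar>xs ! i - ys ! i\<bar>)"

lemma l1_dist_Nil [simp]: "l1_dist [] ys = 0"
  by (simp add: l1_dist_def)

lemma l1_dist_Cons [simp]: "l1_dist (x # xs) (y # ys) = \<bar>x - y\<bar> + l1_dist xs ys"
  unfolding l1_dist_def by (simp only: length_Cons sum.lessThan_Suc_shift) simp

lemma l1_dist_insort_le:
  assumes "length xs = length ys" "sorted xs" "sorted ys"
  shows "l1_dist (insort x xs) (insort y ys) \<le> \<bar>x - y\<bar> + l1_dist xs ys"
  using assms
proof (induction xs ys arbitrary: x y rule: list_induct2)
  case Nil
  then show ?case by simp
next
  case (Cons a xs b ys)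
  have IH: "l1_dist (insort u xs) (insort v ys) \<le> \<bar>u - v\<bar> + l1_dist xs ys" for u v
    using Cons by simp
  have "insort a xs = a # xs" "insort b ys = b # ys"
    using Cons.prems by (auto intro: insort_is_Cons)
  then show ?case
    using IH[of a y] IH[of x b] IH[of x y] by (auto simp: abs_if)
qed

lemma l1_dist_sort_le:
  assumes "length xs = length ys"
  shows "l1_dist (sort xs) (sort ys) \<le> l1_dist xs ys"
  using assms
proof (induction xs ys rule: list_induct2)
  case Nil
  then show ?case by simp
next
  case (Cons x xs y ys)
  have "l1_dist (insort x (sort xs)) (insort y (sort ys)) \<le> \<bar>x - y\<bar> + l1_dist (sort xs) (sort ys)"
    using Cons.hyps by (intro l1_dist_insort_le) simp_all
  then show ?case using Cons.IH by simp
qed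

definition config_list :: "nat \<Rightarrow> (nat \<Rightarrow> real) \<Rightarrow> real list" where
  "config_list k q = map q [1..<Suc k]"

lemma length_config_list [simp]: "length (config_list k q) = k"
  by (simp add: config_list_def)

lemma nth_config_list [simp]: "i < k \<Longrightarrow> config_list k q ! i = q (Suc i)"
  by (simp add: config_list_def del: upt_Suc)

lemma set_config_list: "set (config_list k q) = q ` {1..k}"
  by (simp add: config_list_def atLeastLessThanSuc_atLeastAtMost del: upt_Suc)

definition sorted_config :: "nat \<Rightarrow> (nat \<Rightarrow> real) \<Rightarrow> bool" where
  "sorted_config k s \<longleftrightarrow> (\<forall>i. 1 \<le> i \<and> i < k \<longrightarrow> s i \<le> s (Suc i))"

lemma sorted_configD: "sorted_config k s \<Longrightarrow> 1 \<le> i \<Longrightarrow> i < k \<Longrightarrow> s i \<le> s (Suc i)"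
  by (simp add: sorted_config_def)

lemma sorted_config_mono:
  assumes "sorted_config k s" "1 \<le> x" "x \<le> y" "y \<le> k"
  shows "s x \<le> s y"
  using assms(3,4)
proof (induction y rule: dec_induct)
  case base
  then show ?case by simp
next
  case (step y)
  then show ?case using sorted_configD[OF assms(1), of y] assms(2) by simp
qed

lemma sorted_config_update_first:
  "sorted_config k s \<Longrightarrow> r < s 1 \<Longrightarrow> sorted_config k (s(1 := r))"
  by (auto simp: sorted_config_def)

lemma sorted_config_update_last:
  "sorted_config k s \<Longrightarrow> s k < r \<Longrightarrow> sorted_config k (s(k := r))"
  by (auto simp: sorted_config_def)

lemma sorted_config_move_inward:
  assumes "sorted_config k s" "0 \<le> a" "0 \<le> b" "a \<le> r - s i" "b \<le> s (Suc i) - r"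
  shows "sorted_config k (s(i := s i + a, Suc i := s (Suc i) - b))"
  unfolding sorted_config_def
proof (intro allI impI)
  fix j assume j: "1 \<le> j \<and> j < k"
  show "(s(i := s i + a, Suc i := s (Suc i) - b)) j \<le> (s(i := s i + a, Suc i := s (Suc i) - b)) (Suc j)"
    using sorted_configD[OF assms(1), of j] j assms(2-5)
    by (cases "j = i"; cases "j = Suc i"; cases "Suc j = i") simp_all
qed

definition order_stat :: "nat \<Rightarrow> (nat \<Rightarrow> real) \<Rightarrow> nat \<Rightarrow> real" where
  "order_stat k q m = sort (config_list k q) ! (m - 1)"

lemma sorted_config_list: "sorted_config k s \<Longrightarrow> sorted (config_list k s)"
  by (auto simp: sorted_iff_nth_Suc sorted_config_def)

lemma order_stat_sorted_config:
  assumes "sorted_config k s" "m \<in> {1..k}"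
  shows "order_stat k s m = s m"
  using assms by (auto simp: order_stat_def sorted_config_list sorted_sort_id)

lemma order_stat_cong:
  "(\<And>j. j \<in> {1..k} \<Longrightarrow> q j = q' j) \<Longrightarrow> order_stat k q = order_stat k q'"
  unfolding order_stat_def config_list_def by (metis atLeastLessThanSuc_atLeastAtMost map_cong set_upt)

lemma order_stat_mono: "m \<le> m' \<Longrightarrow> m' \<in> {1..k} \<Longrightarrow> order_stat k q m \<le> order_stat k q m'"
  unfolding order_stat_def by (intro sorted_nth_mono) auto

lemma order_stat_exists:
  assumes "j \<in> {1..k}"
  obtains m where "m \<in> {1..k}" "order_stat k q m = q j"
proof -
  have "q j \<in> set (sort (config_list k q))"
    using assms by (simp add: set_config_list)
  then obtain n where "n < k" "sort (config_list k q) ! n = q j"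
    by (metis in_set_conv_nth length_config_list length_sort)
  then show ?thesis using that[of "Suc n"] by (simp add: order_stat_def)
qed

lemma order_stat_gap:
  assumes "j \<in> {1..k}" "i < k"
  shows "q j \<le> order_stat k q i \<or> order_stat k q (Suc i) \<le> q j"
proof -
  obtain m where "m \<in> {1..k}" "order_stat k q m = q j"
    using order_stat_exists[OF assms(1)] .
  then show ?thesis
    using order_stat_mono[of m i k q] order_stat_mono[of "Suc i" m k q] assms by force
qed

lemma order_stat_1_le:
  assumes "j \<in> {1..k}"
  shows "order_stat k q 1 \<le> q j"
proof -
  obtain m where "m \<in> {1..k}" "order_stat k q m = q j"
    using order_stat_exists[OF assms] .
  then show ?thesis using order_stat_mono[of 1 m k q] by auto
qed

lemma le_order_stat_last:
  assumes "j \<in> {1..k}"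
  shows "q j \<le> order_stat k q k"
proof -
  obtain m where "m \<in> {1..k}" "order_stat k q m = q j"
    using order_stat_exists[OF assms] .
  then show ?thesis using order_stat_mono[of m k k q] by auto
qed

lemma order_stat_dist_le:
  "(\<Sum>m\<in>{1..k}. \<bar>order_stat k q' m - order_stat k q m\<bar>) \<le> config_dist k q q'"
proof -
  have "(\<Sum>m\<in>{1..k}. \<bar>order_stat k q' m - order_stat k q m\<bar>)
      = l1_dist (sort (config_list k q')) (sort (config_list k q))"
    by (simp add: sum.atLeast1_atMost_eq order_stat_def l1_dist_def)
  also have "\<dots> \<le> l1_dist (config_list k q') (config_list k q)"
    by (rule l1_dist_sort_le) simp
  also have "\<dots> = config_dist k q q'"
    by (simp add: sum.atLeast1_atMost_eq l1_dist_def config_dist_def)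
  finally show ?thesis .
qed

locale lambda_dc_analysis =
  fixes k :: nat and lam :: real
  assumes k_ge_1: "1 \<le> k" and lam_pos: "0 < lam" and lam_le_1: "lam \<le> 1"
begin

definition mu :: real where
  "mu = inverse lam"

lemma mu_ge_1: "1 \<le> mu"
  unfolding mu_def using lam_pos lam_le_1 by (simp add: one_le_inverse)

lemma mu_mult_lam: "mu * lam = 1"
  unfolding mu_def using lam_pos by simp

lemma le_mu_mult: "lam * b \<le> a \<Longrightarrow> b \<le> mu * a"
  using mult_left_mono[of "lam * b" a mu] mu_ge_1 by (simp add: mult.assoc[symmetric] mu_mult_lam)

lemma lam_mult_lam_le:
  assumes "0 \<le> t"
  shows "lam * (lam * t) \<le> t"
proof -
  have "lam * lam \<le> 1"
    using lam_pos lam_le_1 by (simp add: mult_le_one)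
  then show ?thesis
    using assms lam_pos by (simp add: mult.assoc[symmetric] mult_left_le_one_le)
qed

definition beta :: "nat \<Rightarrow> real" where
  "beta n = (\<Sum>d<n. mu ^ d)"

lemma beta_0 [simp]: "beta 0 = 0"
  by (simp add: beta_def)

lemma beta_Suc: "beta (Suc n) = beta n + mu ^ n"
  by (simp add: beta_def)

lemma beta_Suc_shift: "beta (Suc n) = 1 + mu * beta n"
  unfolding beta_def by (simp only: sum.lessThan_Suc_shift sum_distrib_left power_Suc power_0)

lemma beta_nonneg: "0 \<le> beta n"
  unfolding beta_def using mu_ge_1 by (intro sum_nonneg) simp

lemma beta_add: "beta (m + n) = beta n + mu ^ n * beta m"
  by (induction m) (simp_all add: beta_Suc algebra_simps power_add)

lemma beta_superadditive: "beta m + beta n \<le> beta (m + n)"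
proof -
  have "1 * beta m \<le> mu ^ n * beta m"
    using mu_ge_1 beta_nonneg by (intro mult_right_mono one_le_power) auto
  then show ?thesis by (simp add: beta_add)
qed

lemma beta_k_pos: "0 < beta k"
  using beta_Suc_shift[of "k - 1"] beta_nonneg[of "k - 1"] mu_ge_1 k_ge_1
  by (simp add: add_pos_nonneg)

definition pair_weight :: "nat \<Rightarrow> nat \<Rightarrow> real" where
  "pair_weight x y = (if x < y then mu ^ (y - x) else 0)"

definition left_weight :: "nat \<Rightarrow> real" where
  "left_weight i = (\<Sum>x\<in>{1..k}. pair_weight x i)"

definition right_weight :: "nat \<Rightarrow> real" where
  "right_weight i = (\<Sum>y\<in>{1..k}. pair_weight i y)"

definition match_coeff :: "nat \<Rightarrow> real" where
  "match_coeff i = 1 + left_weight i + right_weight i"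

lemma pair_weight_nonneg: "0 \<le> pair_weight x y"
  unfolding pair_weight_def using mu_ge_1 by auto

lemma left_weight_nonneg: "0 \<le> left_weight i"
  unfolding left_weight_def by (intro sum_nonneg pair_weight_nonneg)

lemma right_weight_nonneg: "0 \<le> right_weight i"
  unfolding right_weight_def by (intro sum_nonneg pair_weight_nonneg)

lemma match_coeff_nonneg: "0 \<le> match_coeff i"
  unfolding match_coeff_def using left_weight_nonneg[of i] right_weight_nonneg[of i] by linarith

lemma left_weight_1: "left_weight 1 = 0"
  unfolding left_weight_def pair_weight_def by (intro sum.neutral) auto

lemma right_weight_k: "right_weight k = 0"
  unfolding right_weight_def pair_weight_def by (intro sum.neutral) auto

lemma left_weight_Suc:
  assumes "i \<in> {1..k}"
  shows "left_weight (Suc i) = mu * (1 + left_weight i)"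
proof -
  have weight_Suc: "pair_weight x (Suc i) = mu * pair_weight x i + mu * (if x = i then 1 else 0)" for x
    by (cases "x < i") (auto simp: pair_weight_def Suc_diff_le)
  have "left_weight (Suc i) = mu * left_weight i + mu * (\<Sum>x\<in>{1..k}. if x = i then 1 else 0)"
    unfolding left_weight_def
    by (subst sum.cong[OF refl weight_Suc]) (simp only: sum.distrib sum_distrib_left)
  then show ?thesis using assms by (simp add: algebra_simps)
qed

lemma right_weight_Suc:
  assumes "i < k"
  shows "right_weight i = mu * (1 + right_weight (Suc i))"
proof -
  have weight_Suc:
    "pair_weight i y = mu * pair_weight (Suc i) y + mu * (if y = Suc i then 1 else 0)" for y
    by (cases "Suc i < y")
      (auto simp: pair_weight_def Suc_diff_Suc not_less le_Suc_eq simp flip: power_Suc)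
  have "right_weight i = mu * right_weight (Suc i) + mu * (\<Sum>y\<in>{1..k}. if y = Suc i then 1 else 0)"
    unfolding right_weight_def
    by (subst sum.cong[OF refl weight_Suc]) (simp only: sum.distrib sum_distrib_left)
  then show ?thesis using assms by (simp add: algebra_simps)
qed

lemma left_weight_eq: "1 \<le> i \<Longrightarrow> i \<le> k \<Longrightarrow> left_weight i = mu * beta (i - 1)"
proof (induction i rule: nat_induct_at_least)
  case base
  then show ?case using left_weight_1 by simp
next
  case (Suc i)
  then have "beta i = 1 + mu * beta (i - 1)"
    using beta_Suc_shift[of "i - 1"] by simp
  with Suc show ?case by (simp add: left_weight_Suc)
qed

lemma right_weight_eq: "i \<le> k \<Longrightarrow> right_weight i = mu * beta (k - i)"
proof (induction i rule: inc_induct)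
  case base
  then show ?case by (simp add: right_weight_k)
next
  case (step i)
  then have "beta (k - i) = 1 + mu * beta (k - Suc i)"
    using beta_Suc_shift[of "k - Suc i"] by (simp add: Suc_diff_Suc)
  with step show ?case by (simp add: right_weight_Suc)
qed

lemma match_coeff_le_beta:
  assumes "i \<in> {1..k}"
  shows "match_coeff i \<le> beta k"
proof -
  have "beta (i - 1) + beta (k - i) \<le> beta (k - 1)"
    using beta_superadditive[of "i - 1" "k - i"] assms by simp
  then have "mu * (beta (i - 1) + beta (k - i)) \<le> mu * beta (k - 1)"
    using mu_ge_1 by (intro mult_left_mono) auto
  moreover have "beta k = 1 + mu * beta (k - 1)"
    using beta_Suc_shift[of "k - 1"] k_ge_1 by simp
  ultimately show ?thesis
    using assms by (simp add: match_coeff_def left_weight_eq right_weight_eq algebra_simps)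
qed

definition matching_dist :: "(nat \<Rightarrow> real) \<Rightarrow> (nat \<Rightarrow> real) \<Rightarrow> real" where
  "matching_dist s q = (\<Sum>m\<in>{1..k}. match_coeff m * \<bar>s m - order_stat k q m\<bar>)"

definition spread :: "(nat \<Rightarrow> real) \<Rightarrow> real" where
  "spread s = (\<Sum>x\<in>{1..k}. \<Sum>y\<in>{1..k}. pair_weight x y * (s y - s x))"

definition potential :: "(nat \<Rightarrow> real) \<Rightarrow> (nat \<Rightarrow> real) \<Rightarrow> real" where
  "potential s q = matching_dist s q + spread s"

lemma spread_eq: "spread s = (\<Sum>i\<in>{1..k}. (left_weight i - right_weight i) * s i)"
proof -
  have "spread s = (\<Sum>x\<in>{1..k}. \<Sum>y\<in>{1..k}. pair_weight x y * s y)
                 - (\<Sum>x\<in>{1..k}. \<Sum>y\<in>{1..k}. pair_weight x y * s x)"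
    unfolding spread_def by (simp add: right_diff_distrib sum_subtractf)
  also have "(\<Sum>x\<in>{1..k}. \<Sum>y\<in>{1..k}. pair_weight x y * s y) = (\<Sum>i\<in>{1..k}. left_weight i * s i)"
    unfolding left_weight_def by (subst sum.swap) (simp add: sum_distrib_right)
  also have "(\<Sum>x\<in>{1..k}. \<Sum>y\<in>{1..k}. pair_weight x y * s x) = (\<Sum>i\<in>{1..k}. right_weight i * s i)"
    unfolding right_weight_def by (simp add: sum_distrib_right)
  finally show ?thesis
    by (simp add: left_diff_distrib sum_subtractf)
qed

lemma spread_nonneg:
  assumes "sorted_config k s"
  shows "0 \<le> spread s"
  unfolding spread_def
proof (intro sum_nonneg)
  fix x y assume "x \<in> {1..k}" "y \<in> {1..k}"
  then have "x < y \<Longrightarrow> s x \<le> s y"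
    using sorted_config_mono[OF assms, of x y] by simp
  then show "0 \<le> pair_weight x y * (s y - s x)"
    using pair_weight_nonneg[of x y] by (cases "x < y") (auto simp: pair_weight_def)
qed

lemma potential_nonneg: "sorted_config k s \<Longrightarrow> 0 \<le> potential s q"
  unfolding potential_def matching_dist_def
  using spread_nonneg match_coeff_nonneg by (simp add: sum_nonneg add_nonneg_nonneg)

lemma potential_eq_spread:
  assumes "sorted_config k s" "\<And>j. j \<in> {1..k} \<Longrightarrow> q j = s j"
  shows "potential s q = spread s"
  using assms order_stat_cong[OF assms(2)]
  by (simp add: potential_def matching_dist_def order_stat_sorted_config)

lemma potential_offline_move: "potential s q' \<le> potential s q + beta k * config_dist k q q'"
proof -
  have "matching_dist s q' - matching_dist s q
      = (\<Sum>m\<in>{1..k}. match_coeff m * (\<bar>s m - order_stat k q' m\<bar> - \<bar>s m - order_stat k q m\<bar>))"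
    unfolding matching_dist_def by (simp add: sum_subtractf right_diff_distrib)
  also have "\<dots> \<le> (\<Sum>m\<in>{1..k}. beta k * \<bar>order_stat k q' m - order_stat k q m\<bar>)"
  proof (intro sum_mono)
    fix m assume "m \<in> {1..k}"
    then have "match_coeff m * (\<bar>s m - order_stat k q' m\<bar> - \<bar>s m - order_stat k q m\<bar>)
        \<le> match_coeff m * \<bar>order_stat k q' m - order_stat k q m\<bar>"
      using match_coeff_nonneg[of m] by (intro mult_left_mono) auto
    also have "\<dots> \<le> beta k * \<bar>order_stat k q' m - order_stat k q m\<bar>"
      using match_coeff_le_beta \<open>m \<in> {1..k}\<close> by (intro mult_right_mono) auto
    finally show "match_coeff m * (\<bar>s m - order_stat k q' m\<bar> - \<bar>s m - order_stat k q m\<bar>)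
        \<le> beta k * \<bar>order_stat k q' m - order_stat k q m\<bar>" .
  qed
  also have "\<dots> \<le> beta k * config_dist k q q'"
    using order_stat_dist_le beta_k_pos by (simp add: sum_distrib_left[symmetric])
  finally show ?thesis
    unfolding potential_def by simp
qed

definition amortized_term ::
    "(nat \<Rightarrow> real) \<Rightarrow> (nat \<Rightarrow> real) \<Rightarrow> (nat \<Rightarrow> real) \<Rightarrow> nat \<Rightarrow> real" where
  "amortized_term s s' q j = \<bar>s' j - s j\<bar>
     + match_coeff j * (\<bar>s' j - order_stat k q j\<bar> - \<bar>s j - order_stat k q j\<bar>)
     + (left_weight j - right_weight j) * (s' j - s j)"

lemma amortized_cost_eq:
  assumes "J \<subseteq> {1..k}" "\<And>j. j \<in> {1..k} - J \<Longrightarrow> s' j = s j"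
  shows "config_dist k s s' + potential s' q - potential s q = (\<Sum>j\<in>J. amortized_term s s' q j)"
proof -
  have "(\<Sum>j\<in>{1..k}. amortized_term s s' q j)
      = config_dist k s s' + (matching_dist s' q - matching_dist s q) + (spread s' - spread s)"
    by (simp add: amortized_term_def config_dist_def matching_dist_def spread_eq
        sum.distrib sum_subtractf right_diff_distrib)
  then have "config_dist k s s' + potential s' q - potential s q = (\<Sum>j\<in>{1..k}. amortized_term s s' q j)"
    by (simp add: potential_def)
  also have "\<dots> = (\<Sum>j\<in>J. amortized_term s s' q j)"
    using assms by (intro sum.mono_neutral_right) (auto simp: amortized_term_def)
  finally show ?thesis .
qed

lemma amortized_term_le:
  "amortized_term s s' q j
     \<le> (1 + match_coeff j) * \<bar>s' j - s j\<bar> + (left_weight j - right_weight j) * (s' j - s j)"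
proof -
  have "match_coeff j * (\<bar>s' j - order_stat k q j\<bar> - \<bar>s j - order_stat k q j\<bar>)
      \<le> match_coeff j * \<bar>s' j - s j\<bar>"
    using match_coeff_nonneg by (intro mult_left_mono) auto
  then show ?thesis
    by (simp add: amortized_term_def algebra_simps)
qed

lemma amortized_term_toward:
  assumes "s j \<le> s' j \<and> s' j \<le> order_stat k q j \<or> order_stat k q j \<le> s' j \<and> s' j \<le> s j"
  shows "amortized_term s s' q j
     = (1 - match_coeff j) * \<bar>s' j - s j\<bar> + (left_weight j - right_weight j) * (s' j - s j)"
proof -
  have closer: "\<bar>s' j - order_stat k q j\<bar> - \<bar>s j - order_stat k q j\<bar> = - \<bar>s' j - s j\<bar>"
    using assms by auto
  show ?thesis
    unfolding amortized_term_def closer by (simp add: algebra_simps)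
qed

lemma potential_move_first:
  assumes "r < s 1" "order_stat k q 1 \<le> r"
  shows "config_dist k s (s(1 := r)) + potential (s(1 := r)) q \<le> potential s q"
proof -
  have "config_dist k s (s(1 := r)) + potential (s(1 := r)) q - potential s q
      = amortized_term s (s(1 := r)) q 1"
    using k_ge_1 by (subst amortized_cost_eq[of "{1}"]) auto
  also have "\<dots> = - 2 * left_weight 1 * (s 1 - r)"
    using assms by (subst amortized_term_toward) (auto simp: match_coeff_def algebra_simps)
  finally show ?thesis
    using left_weight_1 by simp
qed

lemma potential_move_last:
  assumes "s k < r" "r \<le> order_stat k q k"
  shows "config_dist k s (s(k := r)) + potential (s(k := r)) q \<le> potential s q"
proof -
  have "config_dist k s (s(k := r)) + potential (s(k := r)) q - potential s q
      = amortized_term s (s(k := r)) q k"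
    using k_ge_1 by (subst amortized_cost_eq[of "{k}"]) auto
  also have "\<dots> = - 2 * right_weight k * (r - s k)"
    using assms by (subst amortized_term_toward) (auto simp: match_coeff_def algebra_simps)
  finally show ?thesis
    by (simp add: right_weight_k)
qed

lemma potential_move_inward:
  assumes "1 \<le> i" "i < k" "0 \<le> a" "0 \<le> b" "a \<le> r - s i" "b \<le> s (Suc i) - r"
    and "lam * a \<le> b" "lam * b \<le> a"
    and "r \<le> order_stat k q i \<or> order_stat k q (Suc i) \<le> r"
  defines "s' \<equiv> s(i := s i + a, Suc i := s (Suc i) - b)"
  shows "config_dist k s s' + potential s' q \<le> potential s q"
proof -
  have s'_i: "s' i = s i + a" and s'_Suc: "s' (Suc i) = s (Suc i) - b"
    by (simp_all add: s'_def)
  have "config_dist k s s' + potential s' q - potential s q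
      = amortized_term s s' q i + amortized_term s s' q (Suc i)"
    using assms(1,2) by (subst amortized_cost_eq[of "{i, Suc i}"]) (auto simp: s'_def)
  moreover from assms(9) have "amortized_term s s' q i + amortized_term s s' q (Suc i) \<le> 0"
  proof
    assume "r \<le> order_stat k q i"
    then have "amortized_term s s' q i = - 2 * right_weight i * a"
      using assms(3,5)
      by (subst amortized_term_toward) (auto simp: s'_i match_coeff_def algebra_simps)
    also have "\<dots> = - 2 * (1 + right_weight (Suc i)) * (mu * a)"
      by (simp add: right_weight_Suc[OF assms(2)] algebra_simps)
    also have "\<dots> \<le> - 2 * (1 + right_weight (Suc i)) * b"
      using le_mu_mult[OF assms(8)] right_weight_nonneg[of "Suc i"] by (intro mult_left_mono_neg) auto
    finally show ?thesis
      using amortized_term_le[of s s' q "Suc i"] assms(4)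
      by (simp add: s'_Suc match_coeff_def algebra_simps)
  next
    assume "order_stat k q (Suc i) \<le> r"
    then have "amortized_term s s' q (Suc i) = - 2 * left_weight (Suc i) * b"
      using assms(4,6)
      by (subst amortized_term_toward) (auto simp: s'_Suc match_coeff_def algebra_simps)
    also have "\<dots> = - 2 * (1 + left_weight i) * (mu * b)"
      using assms(1,2) by (simp add: left_weight_Suc algebra_simps)
    also have "\<dots> \<le> - 2 * (1 + left_weight i) * a"
      using le_mu_mult[OF assms(7)] left_weight_nonneg[of i] by (intro mult_left_mono_neg) auto
    finally show ?thesis
      using amortized_term_le[of s s' q i] assms(3)
      by (simp add: s'_i match_coeff_def algebra_simps)
  qed
  ultimately show ?thesis
    by linarith
qed

lemma lambda_dc_step_inward:
  assumes "sorted_config k s" "1 \<le> i" "i < k" "s i < r" "r < s (Suc i)"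
  obtains a b where "0 \<le> a" "0 \<le> b" "a \<le> r - s i" "b \<le> s (Suc i) - r"
    "lam * a \<le> b" "lam * b \<le> a"
    "lambda_dc_step lam k s r p = s(i := s i + a, Suc i := s (Suc i) - b)"
proof -
  have least: "(LEAST i. 1 \<le> i \<and> i < k \<and> s i < r \<and> r < s (Suc i)) = i"
  proof (rule Least_equality)
    fix i' assume "1 \<le> i' \<and> i' < k \<and> s i' < r \<and> r < s (Suc i')"
    then show "i \<le> i'"
      using sorted_config_mono[OF assms(1), of "Suc i'" i] assms(3,4) by force
  qed (use assms in simp)
  have between: "\<exists>i. 1 \<le> i \<and> i < k \<and> s i < r \<and> r < s (Suc i)"
    using assms(2-5) by blast
  have outside: "\<not> r < s 1" "\<not> s k < r"
    using sorted_config_mono[OF assms(1), of 1 i] sorted_config_mono[OF assms(1), of "Suc i" k] assms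
    by auto
  show ?thesis
  proof (cases "p \<le> i")
    case True
    define t where "t = min (r - s i) ((s (Suc i) - r) / lam)"
    have "0 \<le> t" "t \<le> r - s i" "t \<le> (s (Suc i) - r) / lam"
      using assms(4,5) lam_pos by (simp_all add: t_def)
    then have "0 \<le> t" "t \<le> r - s i" "lam * t \<le> s (Suc i) - r"
      using lam_pos by (simp_all add: pos_le_divide_eq mult.commute)
    moreover have "lambda_dc_step lam k s r p = s(i := s i + t, Suc i := s (Suc i) - lam * t)"
      using True outside between unfolding lambda_dc_step_def least by (simp add: t_def Let_def)
    ultimately show ?thesis
      using that[of t "lam * t"] lam_mult_lam_le lam_pos by simp
  next
    case False
    define t where "t = min ((r - s i) / lam) (s (Suc i) - r)"
    have "0 \<le> t" "t \<le> (r - s i) / lam" "t \<le> s (Suc i) - r"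
      using assms(4,5) lam_pos by (simp_all add: t_def)
    then have "0 \<le> t" "lam * t \<le> r - s i" "t \<le> s (Suc i) - r"
      using lam_pos by (simp_all add: pos_le_divide_eq mult.commute)
    moreover have "lambda_dc_step lam k s r p = s(i := s i + lam * t, Suc i := s (Suc i) - t)"
      using False outside between unfolding lambda_dc_step_def least by (simp add: t_def Let_def)
    ultimately show ?thesis
      using that[of "lam * t" t] lam_mult_lam_le lam_pos by simp
  qed
qed

(* The prediction only decides which neighbour moves at speed lam; the analysis uses no more
   than the resulting ratio bounds lam a <= b and lam b <= a. *)
lemma lambda_dc_step_cases:
  assumes "sorted_config k s"
  obtains (first) "r < s 1" "lambda_dc_step lam k s r p = s(1 := r)"
  | (last) "s k < r" "lambda_dc_step lam k s r p = s(k := r)"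
  | (inward) i a b where "1 \<le> i" "i < k" "0 \<le> a" "0 \<le> b" "a \<le> r - s i" "b \<le> s (Suc i) - r"
      "lam * a \<le> b" "lam * b \<le> a" "lambda_dc_step lam k s r p = s(i := s i + a, Suc i := s (Suc i) - b)"
  | (stay) "lambda_dc_step lam k s r p = s"
proof -
  consider "r < s 1" | "\<not> r < s 1" "s k < r"
    | i where "1 \<le> i" "i < k" "s i < r" "r < s (Suc i)"
    | "\<not> r < s 1" "\<not> s k < r" "\<nexists>i. 1 \<le> i \<and> i < k \<and> s i < r \<and> r < s (Suc i)"
    by blast
  then show ?thesis
  proof cases
    case 1
    then show ?thesis using first by (simp add: lambda_dc_step_def)
  next
    case 2
    then show ?thesis using last by (simp add: lambda_dc_step_def)
  next
    case (3 i)
    then show ?thesis using lambda_dc_step_inward[OF assms] inward by metis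
  next
    case 4
    then have "lambda_dc_step lam k s r p = s"
      unfolding lambda_dc_step_def by (simp only: if_False)
    then show ?thesis using stay by simp
  qed
qed

lemma sorted_config_lambda_dc_step:
  assumes "sorted_config k s"
  shows "sorted_config k (lambda_dc_step lam k s r p)"
  using assms
proof (cases rule: lambda_dc_step_cases[of s r p])
  case first
  then show ?thesis using sorted_config_update_first[OF assms first(1)] by simp
next
  case last
  then show ?thesis using sorted_config_update_last[OF assms last(1)] by simp
next
  case (inward i a b)
  then show ?thesis using sorted_config_move_inward[OF assms] by simp
next
  case stay
  then show ?thesis using assms by simp
qed

lemma potential_lambda_dc_step:
  assumes "sorted_config k s" "j \<in> {1..k}" "q j = r"
  shows "config_dist k s (lambda_dc_step lam k s r p) + potential (lambda_dc_step lam k s r p) q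
    \<le> potential s q"
  using assms(1)
proof (cases rule: lambda_dc_step_cases[of s r p])
  case first
  then show ?thesis
    using potential_move_first order_stat_1_le[OF assms(2), of q] assms(3) by simp
next
  case last
  then show ?thesis
    using potential_move_last le_order_stat_last[OF assms(2), of q] assms(3) by simp
next
  case (inward i a b)
  then show ?thesis
    using potential_move_inward order_stat_gap[OF assms(2), of i q] assms(3) by simp
next
  case stay
  then show ?thesis
    by (simp add: config_dist_def)
qed

lemma lambda_dc_cost_le:
  assumes "sorted_config k s" "\<forall>t<length I. \<exists>j\<in>{1..k}. C (Suc t) j = fst (I ! t)"
  shows "lambda_dc_cost lam k s I
    \<le> beta k * (\<Sum>t<length I. config_dist k (C t) (C (Suc t))) + potential s (C 0)"
  using assms
proof (induction I arbitrary: s C)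
  case Nil
  then show ?case
    using potential_nonneg by simp
next
  case (Cons x I)
  obtain r p where x: "x = (r, p)"
    by fastforce
  define s' where "s' = lambda_dc_step lam k s r p"
  obtain j where j: "j \<in> {1..k}" "C 1 j = r"
    using Cons.prems(2) x by force
  have IH: "lambda_dc_cost lam k s' I
      \<le> beta k * (\<Sum>t<length I. config_dist k (C (Suc t)) (C (Suc (Suc t)))) + potential s' (C 1)"
    using Cons.IH[of s' "\<lambda>t. C (Suc t)"] Cons.prems sorted_config_lambda_dc_step
    by (force simp: s'_def)
  have "lambda_dc_cost lam k s (x # I) = config_dist k s s' + lambda_dc_cost lam k s' I"
    by (simp add: x s'_def Let_def)
  also have "\<dots> \<le> config_dist k s s' + potential s' (C 1)
      + beta k * (\<Sum>t<length I. config_dist k (C (Suc t)) (C (Suc (Suc t))))"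
    using IH by simp
  also have "\<dots> \<le> potential s (C 1)
      + beta k * (\<Sum>t<length I. config_dist k (C (Suc t)) (C (Suc (Suc t))))"
    using potential_lambda_dc_step[OF Cons.prems(1) j(1), of "C 1" r p] j(2) by (simp add: s'_def)
  also have "\<dots> \<le> potential s (C 0) + beta k * config_dist k (C 0) (C 1)
      + beta k * (\<Sum>t<length I. config_dist k (C (Suc t)) (C (Suc (Suc t))))"
    using potential_offline_move[of s "C 1" "C 0"] by simp
  also have "\<dots> = beta k * (\<Sum>t<length (x # I). config_dist k (C t) (C (Suc t))) + potential s (C 0)"
    unfolding length_Cons sum.lessThan_Suc_shift by (simp add: algebra_simps)
  finally show ?case .
qed

lemma lambda_dc_cost_le_schedule_cost:
  assumes "sorted_config k s0" "valid_schedule k s0 (map fst I) C"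
  shows "lambda_dc_cost lam k s0 I \<le> beta k * schedule_cost k (length I) C + spread s0"
proof -
  have "\<forall>t<length I. \<exists>j\<in>{1..k}. C (Suc t) j = fst (I ! t)"
  proof (intro allI impI)
    fix t assume t: "t < length I"
    then have "Suc t \<in> {1..length (map fst I)}"
      by simp
    then have "\<exists>j\<in>{1..k}. C (Suc t) j = map fst I ! t"
      using assms(2) unfolding valid_schedule_def by (metis diff_Suc_1)
    then show "\<exists>j\<in>{1..k}. C (Suc t) j = fst (I ! t)"
      using t by simp
  qed
  moreover have "potential s0 (C 0) = spread s0"
    using assms by (intro potential_eq_spread) (auto simp: valid_schedule_def)
  moreover have "schedule_cost k (length I) C = (\<Sum>t<length I. config_dist k (C t) (C (Suc t)))"
    by (simp add: schedule_cost_def sum.atLeast1_atMost_eq)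
  ultimately show ?thesis
    using lambda_dc_cost_le[OF assms(1), of I C] by simp
qed

end

lemma le_mult_Inf_add:
  fixes S :: "real set"
  assumes "S \<noteq> {}" "0 < b" "\<And>x. x \<in> S \<Longrightarrow> a \<le> b * x + c"
  shows "a \<le> b * Inf S + c"
proof -
  have "(a - c) / b \<le> Inf S"
  proof (rule cInf_greatest[OF assms(1)])
    fix x assume "x \<in> S"
    then show "(a - c) / b \<le> x"
      using assms(2) assms(3)[of x] by (simp add: pos_divide_le_eq algebra_simps)
  qed
  then show ?thesis
    using assms(2) by (simp add: pos_divide_le_eq algebra_simps)
qed

lemma valid_schedule_exists:
  "1 \<le> k \<Longrightarrow> valid_schedule k s0 rs (\<lambda>t j. if t = 0 then s0 j else rs ! (t - 1))"
  by (auto simp: valid_schedule_def)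

theorem lemma9:
  fixes k :: nat and lam :: real and s0 :: "nat \<Rightarrow> real"
  assumes "1 \<le> k" and "0 < lam" and "lam \<le> 1"
    and "\<forall>i. 1 \<le> i \<and> i < k \<longrightarrow> s0 i \<le> s0 (Suc i)"
  shows "\<exists>c\<ge>0. \<forall>I :: (real \<times> nat) list.
           (\<forall>x\<in>set I. snd x \<in> {1..k}) \<longrightarrow>
           lambda_dc_cost lam k s0 I
             \<le> (\<Sum>i<k. inverse lam ^ i) * opt_cost k s0 (map fst I) + c"
proof -
  interpret lambda_dc_analysis k lam
    using assms(1-3) by unfold_locales
  have sorted: "sorted_config k s0"
    using assms(4) by (simp add: sorted_config_def)
  have beta_k: "beta k = (\<Sum>i<k. inverse lam ^ i)"
    by (simp add: beta_def mu_def)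
  have "lambda_dc_cost lam k s0 I \<le> beta k * opt_cost k s0 (map fst I) + spread s0" for I
    unfolding opt_cost_def
  proof (rule le_mult_Inf_add)
    show "{schedule_cost k (length (map fst I)) C |C. valid_schedule k s0 (map fst I) C} \<noteq> {}"
      using valid_schedule_exists[OF assms(1)] by blast
  qed (use beta_k_pos lambda_dc_cost_le_schedule_cost[OF sorted] in auto)
  then show ?thesis
    using spread_nonneg[OF sorted] unfolding beta_k by blast
qed

end
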